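(* For every $n\in\mathbb N$, $$\varphi^*(n)=\sum_{\substack{d\mid n\\ \kappa(d)=\kappa(n)}}\varphi(d).$$
   Context: $\varphi$ is Euler's totient function. $d\mid\mid n$ means $d\mid n$ and $\gcd(d,n/d)=1$; $(j,n)_*=\max\{d: d\mid j,\ d\mid\mid n\}$; $\varphi^*(n)=\#\{1\le j\le n:(j,n)_*=1\}$. $\kappa(n)=\prod_{p\mid n}p$ is the squarefree kernel. *)

theory Defs
  imports "HOL-Number_Theory.Number_Theory"
begin

definition unitary_dvd :: "nat \<Rightarrow> nat \<Rightarrow> bool" where
  "unitary_dvd d n \<longleftrightarrow> d dvd n \<and> coprime d (n div d)"

definition bi_gcd :: "nat \<Rightarrow> nat \<Rightarrow> nat" where
  "bi_gcd j n = Max {d. d dvd j \<and> unitary_dvd d n}"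

definition unitary_totient :: "nat \<Rightarrow> nat" where
  "unitary_totient n = card {j \<in> {1..n}. bi_gcd j n = 1}"

definition kernel :: "nat \<Rightarrow> nat" where
  "kernel n = (\<Prod>p\<in>prime_factors n. p)"

end

theory Submission
  imports Defs
begin

text \<open>Call \<open>j\<close> free of the prime-power parts of \<open>n\<close> if no \<open>p ^ multiplicity p n\<close> divides it.
  The unitary divisors of \<open>n\<close> are exactly the products of such parts, so \<open>(j, n)\<^sub>* = 1\<close> says
  that \<open>j\<close> is free of them. This depends only on \<open>gcd j n\<close>, so grouping \<open>j\<close> by \<open>gcd j n = n / d\<close>
  gives the sum of \<open>\<phi>(d)\<close> over those \<open>d\<close> for which \<open>n / d\<close> is free of the parts, i.e. over
  those \<open>d\<close> containing every prime of \<open>n\<close>, i.e. with \<open>\<kappa>(d) = \<kappa>(n)\<close>.\<close>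

definition free_of_prime_power_parts :: "nat \<Rightarrow> nat \<Rightarrow> bool" where
  "free_of_prime_power_parts n j \<longleftrightarrow> (\<forall>p\<in>prime_factors n. \<not> p ^ multiplicity p n dvd j)"

lemma free_of_prime_power_parts_gcd_iff:
  "free_of_prime_power_parts n (gcd j n) \<longleftrightarrow> free_of_prime_power_parts n j"
  unfolding free_of_prime_power_parts_def using multiplicity_dvd by (auto intro: dvd_trans)

lemma prime_power_multiplicity_mult_dvd_left_iff:
  fixes p x y :: nat
  assumes "prime p" "x \<noteq> 0" "y \<noteq> 0"
  shows "p ^ multiplicity p (x * y) dvd x \<longleftrightarrow> \<not> p dvd y"
proof -
  have "multiplicity p (x * y) = multiplicity p x + multiplicity p y"
    using assms by (simp add: prime_elem_multiplicity_mult_distrib)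
  then show ?thesis
    using assms prime_gt_1_nat[of p]
    by (simp add: power_dvd_iff_le_multiplicity multiplicity_eq_zero_iff)
qed

lemma prime_factors_kernel: "prime_factors (kernel n) = prime_factors n"
proof -
  have "prime_factors (kernel n) = \<Union>((prime_factors \<circ> (\<lambda>p. p)) ` prime_factors n)"
    unfolding kernel_def by (rule prime_factors_prod) auto
  also have "\<dots> = prime_factors n"
    using prime_prime_factors[OF in_prime_factors_imp_prime] by auto
  finally show ?thesis .
qed

lemma kernel_eq_iff_prime_factors_eq: "kernel d = kernel n \<longleftrightarrow> prime_factors d = prime_factors n"
  by (metis prime_factors_kernel kernel_def)

lemma kernel_eq_iff_free_of_prime_power_parts_cofactor:
  fixes n d :: nat
  assumes "n > 0" "d dvd n"
  shows "kernel d = kernel n \<longleftrightarrow> free_of_prime_power_parts n (n div d)"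
proof -
  have "d \<noteq> 0" "n div d \<noteq> 0" and n_eq: "n = (n div d) * d"
    using assms by (auto elim!: dvdE)
  have "prime_factors d \<subseteq> prime_factors n"
    using assms by (intro dvd_prime_factors) auto
  then have "kernel d = kernel n \<longleftrightarrow> (\<forall>p\<in>prime_factors n. p dvd d)"
    using \<open>d \<noteq> 0\<close> by (auto simp: kernel_eq_iff_prime_factors_eq in_prime_factors_iff)
  also have "\<dots> \<longleftrightarrow> free_of_prime_power_parts n (n div d)"
    unfolding free_of_prime_power_parts_def
    using prime_power_multiplicity_mult_dvd_left_iff[of _ "n div d" d] \<open>d \<noteq> 0\<close> \<open>n div d \<noteq> 0\<close>
    by (metis n_eq in_prime_factors_imp_prime)
  finally show ?thesis .
qed

lemma unitary_dvd_prime_power_multiplicity: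
  fixes n p :: nat
  assumes "n > 0" "prime p"
  shows "unitary_dvd (p ^ multiplicity p n) n"
proof -
  obtain e where e: "n = p ^ multiplicity p n * e"
    using multiplicity_dvd by blast
  have "e \<noteq> 0"
    using e \<open>n > 0\<close> by (metis mult_0_right less_irrefl)
  have "p ^ multiplicity p n > 0"
    using assms by (simp add: prime_gt_0_nat)
  then have "n div p ^ multiplicity p n = e"
    using e by (metis nonzero_mult_div_cancel_left less_irrefl)
  moreover have "\<not> p dvd e"
    using prime_power_multiplicity_mult_dvd_left_iff[of p "p ^ multiplicity p n" e] assms
      \<open>e \<noteq> 0\<close> e by auto
  ultimately show ?thesis
    using assms multiplicity_dvd unfolding unitary_dvd_def by (simp add: prime_imp_coprime)
qed

lemma prime_power_multiplicity_dvd_unitary_divisor: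
  fixes d n p :: nat
  assumes "n > 0" "unitary_dvd d n" "prime p" "p dvd d"
  shows "p ^ multiplicity p n dvd d"
proof -
  have "d dvd n" and coprime: "coprime d (n div d)"
    using assms(2) unfolding unitary_dvd_def by auto
  with assms have "d \<noteq> 0" "n div d \<noteq> 0" and n_eq: "n = d * (n div d)"
    by (auto elim!: dvdE)
  have "\<not> p dvd n div d"
    using coprime_common_divisor[OF coprime \<open>p dvd d\<close>] \<open>prime p\<close> not_prime_unit by blast
  then show ?thesis
    using prime_power_multiplicity_mult_dvd_left_iff[of p d "n div d"] assms
      \<open>d \<noteq> 0\<close> \<open>n div d \<noteq> 0\<close> n_eq by metis
qed

lemma bi_gcd_eq_1_iff_unitary_divisors:
  fixes j n :: nat
  assumes "n > 0"
  shows "bi_gcd j n = 1 \<longleftrightarrow> (\<forall>d. d dvd j \<and> unitary_dvd d n \<longrightarrow> d = 1)"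
proof -
  define D where "D = {d. d dvd j \<and> unitary_dvd d n}"
  have "D \<subseteq> {1..n}"
    using assms unfolding D_def unitary_dvd_def
    by (auto simp: dvd_imp_le Suc_le_eq intro: Nat.gr0I)
  then have "finite D" by (rule finite_subset) simp
  moreover have "1 \<in> D" unfolding D_def unitary_dvd_def by simp
  ultimately have "Max D = 1 \<longleftrightarrow> D = {1}"
    using \<open>D \<subseteq> {1..n}\<close> Max_ge[OF \<open>finite D\<close>] by (fastforce simp: subset_iff)
  then show ?thesis
    unfolding bi_gcd_def D_def[symmetric] using \<open>1 \<in> D\<close> by (auto simp: D_def)
qed

lemma bi_gcd_eq_1_iff:
  fixes j n :: nat
  assumes "n > 0"
  shows "bi_gcd j n = 1 \<longleftrightarrow> free_of_prime_power_parts n j"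
  unfolding bi_gcd_eq_1_iff_unitary_divisors[OF assms] free_of_prime_power_parts_def
proof (intro iffI ballI notI allI impI)
  fix p assume "\<forall>d. d dvd j \<and> unitary_dvd d n \<longrightarrow> d = 1"
    and "p \<in> prime_factors n" "p ^ multiplicity p n dvd j"
  with assms have "p ^ multiplicity p n = 1" "multiplicity p n > 0" "prime p"
    by (auto simp: unitary_dvd_prime_power_multiplicity prime_factors_multiplicity)
  then show False
    by (metis one_less_power prime_gt_1_nat less_irrefl)
next
  fix d assume free: "\<forall>p\<in>prime_factors n. \<not> p ^ multiplicity p n dvd j"
    and d: "d dvd j \<and> unitary_dvd d n"
  show "d = 1"
  proof (rule ccontr)
    assume "d \<noteq> 1"
    then obtain p where "prime p" "p dvd d" using prime_factor_nat by blast
    with d assms have "p ^ multiplicity p n dvd j" "p \<in> prime_factors n"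
      using prime_power_multiplicity_dvd_unitary_divisor[of n d p]
      by (auto simp: unitary_dvd_def in_prime_factors_iff intro: dvd_trans)
    with free show False by blast
  qed
qed

lemma card_gcd_invariant_eq_sum_totient:
  fixes n :: nat and P :: "nat \<Rightarrow> bool"
  assumes "n > 0" and P_gcd: "\<And>j. P (gcd j n) \<longleftrightarrow> P j"
  shows "card {j\<in>{1..n}. P j} = (\<Sum>d | d dvd n \<and> P (n div d). totient d)"
proof -
  define A where "A g = {k\<in>{0<..n}. gcd k n = g}" for g
  have "{j\<in>{1..n}. P j} = (\<Union>g\<in>{g. g dvd n \<and> P g}. A g)"
    unfolding A_def by (auto simp: P_gcd)
  then have "card {j\<in>{1..n}. P j} = card (\<Union>g\<in>{g. g dvd n \<and> P g}. A g)"
    by simp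
  also have "\<dots> = (\<Sum>g | g dvd n \<and> P g. card (A g))"
    using assms by (intro card_UN_disjoint) (auto simp: A_def)
  also have "\<dots> = (\<Sum>g | g dvd n \<and> P g. totient (n div g))"
    unfolding A_def using assms by (intro sum.cong refl card_gcd_eq_totient) auto
  also have "\<dots> = (\<Sum>d | d dvd n \<and> P (n div d). totient d)"
  proof -
    have "n div (n div d) = d" "n div d dvd n" if "d dvd n" for d
      using that assms by (auto elim!: dvdE)
    then show ?thesis
      by (intro sum.reindex_bij_witness[of _ "(div) n" "(div) n"]) auto
  qed
  finally show ?thesis .
qed

theorem corollary7p3:
  fixes n :: nat
  assumes "n \<ge> 1"
  shows "unitary_totient n = (\<Sum>d\<in>{d. d dvd n \<and> kernel d = kernel n}. totient d)"
proof -
  have "n > 0" using assms by simp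
  have "unitary_totient n = card {j\<in>{1..n}. free_of_prime_power_parts n j}"
    unfolding unitary_totient_def using bi_gcd_eq_1_iff[OF \<open>n > 0\<close>] by simp
  also have "\<dots> = (\<Sum>d | d dvd n \<and> free_of_prime_power_parts n (n div d). totient d)"
    using \<open>n > 0\<close> free_of_prime_power_parts_gcd_iff by (rule card_gcd_invariant_eq_sum_totient)
  also have "{d. d dvd n \<and> free_of_prime_power_parts n (n div d)} =
             {d. d dvd n \<and> kernel d = kernel n}"
    using kernel_eq_iff_free_of_prime_power_parts_cofactor[OF \<open>n > 0\<close>] by auto
  finally show ?thesis .
qed

end
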